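(* Let $\mu$ be a probability measure on $\mathbb{R}$ with finite support $V$ and let $c:V\to\mathbb{R}$ satisfy $c(v)\le v$ for all $v\in V$. Then there exist incentive compatible distributions $\nu_1,\dots,\nu_J$ and weights $(q_1,\dots,q_J)\in\Delta(\{1,\dots,J\})$ such that $\sum_j q_j\nu_j=\mu$ and $\sigma^*(c,\mu)\subset\sigma^*(c,\nu_j)$ for every $j$.
   Context: For a finitely supported probability $\nu$ on $V$ and $p\in\mathbb{R}$, $\pi(c,\nu,p)=\sum_{v\in\mathrm{Supp}(\nu),\,v\ge p}(p-c(v))\nu(\{v\})$ and $\sigma^*(c,\nu)=\arg\max_{p\in\mathbb{R}}\pi(c,\nu,p)$. A distribution $\nu$ on $V$ is an incentive compatible distribution (ICD) if $\pi(c,\nu,p)$ is the same nonnegative constant for all $p\in\mathrm{Supp}(\nu)$. *)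

theory Defs
  imports "HOL-Probability.Probability"
begin

definition profit :: "(real \<Rightarrow> real) \<Rightarrow> real pmf \<Rightarrow> real \<Rightarrow> real" where
  "profit c \<nu> p = (\<Sum>v\<in>{v\<in>set_pmf \<nu>. v \<ge> p}. (p - c v) * pmf \<nu> v)"

definition opt_prices :: "(real \<Rightarrow> real) \<Rightarrow> real pmf \<Rightarrow> real set" where
  "opt_prices c \<nu> = {p. \<forall>q. profit c \<nu> q \<le> profit c \<nu> p}"

definition ICD :: "(real \<Rightarrow> real) \<Rightarrow> real pmf \<Rightarrow> bool" where
  "ICD c \<nu> \<longleftrightarrow> (\<exists>k\<ge>0. \<forall>p\<in>set_pmf \<nu>. profit c \<nu> p = k)"

end

theory Submission
  imports Defs
begin

text \<open>
  Let \<open>S\<close> be the set of optimal prices of \<open>\<mu>\<close> inside its support. Some ICD \<open>\<nu>\<close> has support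
  exactly \<open>S\<close>: build it from the highest point down, giving each new lowest valuation just
  enough mass that the profit at it equals the common profit above (the mass is positive
  because an optimal price below the top of the support has \<open>c s < s\<close>). Every optimal price of
  \<open>\<mu>\<close> is then optimal for \<open>\<nu>\<close>. Write \<open>\<mu> = t \<nu> + (1 - t) \<mu>'\<close> with \<open>t\<close> maximal subject to
  \<open>\<mu>' \<ge> 0\<close> and to all optimal prices of \<open>\<mu>\<close> staying optimal for \<open>\<mu>'\<close>. At the maximal \<open>t\<close>
  either a support point of \<open>\<mu>\<close> is used up or a further support point becomes optimal
  for \<open>\<mu>'\<close>, so \<open>|supp \<mu>| + |supp \<mu> - \<sigma>*(\<mu>)|\<close> drops and induction applies to \<open>\<mu>'\<close>.
\<close>

definition mix_pmf :: "real \<Rightarrow> 'a pmf \<Rightarrow> 'a pmf \<Rightarrow> 'a pmf" where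
  "mix_pmf \<alpha> p q = bernoulli_pmf \<alpha> \<bind> (\<lambda>b. if b then p else q)"

lemma pmf_mix_pmf:
  assumes "0 \<le> \<alpha>" "\<alpha> \<le> 1"
  shows "pmf (mix_pmf \<alpha> p q) x = \<alpha> * pmf p x + (1 - \<alpha>) * pmf q x"
  using assms by (simp add: mix_pmf_def pmf_bind)

lemma set_pmf_mix_pmf_subset: "set_pmf (mix_pmf \<alpha> p q) \<subseteq> set_pmf p \<union> set_pmf q"
  by (auto simp: mix_pmf_def split: if_splits)

lemma set_pmf_mix_pmf:
  assumes "0 < \<alpha>" "\<alpha> < 1"
  shows "set_pmf (mix_pmf \<alpha> p q) = set_pmf p \<union> set_pmf q"
  using assms by (auto simp: mix_pmf_def UNIV_bool)

lemma pmf_embed_pmf_finite: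
  fixes f :: "'a \<Rightarrow> real"
  assumes "finite A" "\<And>x. 0 \<le> f x" "\<And>x. x \<notin> A \<Longrightarrow> f x = 0" "(\<Sum>x\<in>A. f x) = 1"
  shows "pmf (embed_pmf f) x = f x"
proof -
  have "(\<integral>\<^sup>+x. ennreal (f x) \<partial>count_space UNIV) = (\<Sum>x\<in>A. ennreal (f x))"
    using assms by (intro nn_integral_count_space') auto
  also have "\<dots> = 1"
    using assms by (simp add: sum_ennreal)
  finally have "(\<integral>\<^sup>+x. ennreal (f x) \<partial>count_space UNIV) = 1" .
  with assms(2) show ?thesis
    by (simp add: pmf_embed_pmf)
qed

lemma mix_pmf_residual:
  assumes fin: "finite (set_pmf \<mu>)" and t: "0 < t" "t < 1"
    and le: "\<And>v. t * pmf \<nu> v \<le> pmf \<mu> v"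
  obtains \<mu>' where "\<mu> = mix_pmf t \<nu> \<mu>'" "set_pmf \<mu>' \<subseteq> set_pmf \<mu>"
proof -
  define V where "V = set_pmf \<mu>"
  define f where "f v = (pmf \<mu> v - t * pmf \<nu> v) / (1 - t)" for v
  have \<nu>V: "set_pmf \<nu> \<subseteq> V"
  proof
    fix v assume "v \<in> set_pmf \<nu>"
    then have "0 < t * pmf \<nu> v" using t by (simp add: pmf_positive)
    then show "v \<in> V" using le[of v] by (auto simp: V_def set_pmf_iff)
  qed
  have "(\<Sum>v\<in>V. f v) = ((\<Sum>v\<in>V. pmf \<mu> v) - t * (\<Sum>v\<in>V. pmf \<nu> v)) / (1 - t)"
    by (simp add: f_def sum_divide_distrib[symmetric] sum_subtractf sum_distrib_left)
  also have "\<dots> = 1"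
    using fin \<nu>V t by (simp add: V_def sum_pmf_eq_1)
  finally have f_sum: "(\<Sum>v\<in>V. f v) = 1" .
  have f_nonneg: "0 \<le> f v" for v
    using le[of v] t by (simp add: f_def)
  have f_zero: "f v = 0" if "v \<notin> V" for v
    using that \<nu>V by (auto simp: f_def V_def set_pmf_iff)
  have finV: "finite V" using fin by (simp add: V_def)
  note f_pmf = pmf_embed_pmf_finite[OF finV f_nonneg f_zero f_sum]
  show thesis
  proof
    show "\<mu> = mix_pmf t \<nu> (embed_pmf f)"
      using t by (intro pmf_eqI) (simp add: pmf_mix_pmf f_pmf, simp add: f_def)
    show "set_pmf (embed_pmf f) \<subseteq> set_pmf \<mu>"
    proof
      fix v assume "v \<in> set_pmf (embed_pmf f)"
      then have "f v \<noteq> 0" by (simp add: set_pmf_iff f_pmf)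
      then show "v \<in> set_pmf \<mu>" using f_zero V_def by blast
    qed
  qed
qed

lemma pmf_le_imp_eq:
  assumes "finite (set_pmf \<mu>)" and le: "\<And>v. pmf \<nu> v \<le> pmf \<mu> v"
  shows "\<nu> = \<mu>"
proof (rule pmf_eqI)
  define V where "V = set_pmf \<mu>"
  have \<nu>V: "set_pmf \<nu> \<subseteq> V"
    using le by (auto simp: V_def set_pmf_iff) (metis order.antisym pmf_nonneg)
  have "(\<Sum>v\<in>V. pmf \<mu> v - pmf \<nu> v) = 0"
    using assms \<nu>V by (simp add: V_def sum_subtractf sum_pmf_eq_1)
  then have "\<forall>v\<in>V. pmf \<mu> v - pmf \<nu> v = 0"
    using assms le by (subst (asm) sum_nonneg_eq_0_iff) (auto simp: V_def)
  moreover have "pmf \<nu> v = 0" "pmf \<mu> v = 0" if "v \<notin> V" for v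
    using that \<nu>V by (auto simp: V_def set_pmf_iff)
  ultimately show "pmf \<nu> v = pmf \<mu> v" for v
    by (cases "v \<in> V") auto
qed

lemma min_ratio_exists:
  fixes a b :: "'i \<Rightarrow> real"
  assumes "finite I" "\<exists>i\<in>I. 0 < a i" "\<forall>i\<in>I. 0 \<le> a i \<and> 0 \<le> b i" "\<forall>i\<in>I. 0 < a i \<longrightarrow> 0 < b i"
  obtains t where "0 < t" "\<forall>i\<in>I. t * a i \<le> b i" "\<exists>i\<in>I. 0 < a i \<and> t * a i = b i"
proof -
  define pos where "pos = {i\<in>I. 0 < a i}"
  define t where "t = Min ((\<lambda>i. b i / a i) ` pos)"
  have fin: "finite pos" "pos \<noteq> {}"
    using assms by (auto simp: pos_def)
  obtain i where i: "i \<in> pos" "t = b i / a i"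
    using Min_in[of "(\<lambda>i. b i / a i) ` pos"] fin unfolding t_def by blast
  show thesis
  proof
    show "0 < t" using i assms by (auto simp: pos_def)
    show "\<exists>i\<in>I. 0 < a i \<and> t * a i = b i" using i by (auto simp: pos_def)
    show "\<forall>j\<in>I. t * a j \<le> b j"
    proof
      fix j assume j: "j \<in> I"
      show "t * a j \<le> b j"
      proof (cases "0 < a j")
        case True
        then have "t \<le> b j / a j"
          using fin j by (auto simp: t_def pos_def)
        then show ?thesis using True by (simp add: pos_le_divide_eq)
      next
        case False
        then have "a j = 0" using j assms by force
        then show ?thesis using j assms by simp
      qed
    qed
  qed
qed

lemma card_add_card_Diff_less:
  assumes "finite V" "V' \<subseteq> V" "A \<subseteq> A'" "V' \<noteq> V \<or> (V - A) \<inter> A' \<noteq> {}"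
  shows "card V' + card (V' - A') < card V + card (V - A)"
proof -
  have fin: "finite V'" "V' - A' \<subseteq> V - A"
    using assms finite_subset by auto
  show ?thesis
  proof (cases "V' = V")
    case True
    then have "V' - A' \<subset> V - A" using assms fin by auto
    then show ?thesis using True assms by (simp add: psubset_card_mono)
  next
    case False
    then have "card V' < card V" using assms by (simp add: psubset_card_mono)
    moreover have "card (V' - A') \<le> card (V - A)" using assms fin by (simp add: card_mono)
    ultimately show ?thesis by simp
  qed
qed

lemma profit_eq_sum_superset:
  assumes "finite A" "set_pmf \<nu> \<subseteq> A"
  shows "profit c \<nu> p = (\<Sum>v\<in>{v\<in>A. p \<le> v}. (p - c v) * pmf \<nu> v)"
  unfolding profit_def using assms by (intro sum.mono_neutral_left) (auto simp: set_pmf_iff)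

lemma profit_mix_pmf:
  assumes "finite (set_pmf \<nu>)" "finite (set_pmf \<nu>')" "0 \<le> \<alpha>" "\<alpha> \<le> 1"
  shows "profit c (mix_pmf \<alpha> \<nu> \<nu>') p = \<alpha> * profit c \<nu> p + (1 - \<alpha>) * profit c \<nu>' p"
proof -
  define A where "A = set_pmf \<nu> \<union> set_pmf \<nu>'"
  have A: "finite A" "set_pmf \<nu> \<subseteq> A" "set_pmf \<nu>' \<subseteq> A" "set_pmf (mix_pmf \<alpha> \<nu> \<nu>') \<subseteq> A"
    using assms set_pmf_mix_pmf_subset[of \<alpha> \<nu> \<nu>'] by (auto simp: A_def)
  show ?thesis
    unfolding profit_eq_sum_superset[OF A(1) A(2)] profit_eq_sum_superset[OF A(1) A(3)]
      profit_eq_sum_superset[OF A(1) A(4)]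
    using assms by (simp add: pmf_mix_pmf sum_distrib_left sum.distrib[symmetric] algebra_simps)
qed

lemma profit_return_pmf: "profit c (return_pmf a) p = (if p \<le> a then p - c a else 0)"
proof (cases "p \<le> a")
  case True
  then have above: "{v\<in>set_pmf (return_pmf a). p \<le> v} = {a}" by auto
  show ?thesis unfolding profit_def above using True by simp
next
  case False
  then have above: "{v\<in>set_pmf (return_pmf a). p \<le> v} = {}" by auto
  show ?thesis unfolding profit_def above using False by simp
qed

lemma profit_above_support:
  assumes "\<forall>v\<in>set_pmf \<nu>. v < p"
  shows "profit c \<nu> p = 0"
  unfolding profit_def using assms by (auto intro!: sum.neutral)

lemma Max_set_pmf_in: "finite (set_pmf \<nu>) \<Longrightarrow> Max (set_pmf \<nu>) \<in> set_pmf \<nu>"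
  by (rule Max_in) (simp_all add: set_pmf_not_empty)

lemma profit_Max_support:
  assumes "finite (set_pmf \<nu>)"
  defines "m \<equiv> Max (set_pmf \<nu>)"
  shows "profit c \<nu> m = (m - c m) * pmf \<nu> m"
proof -
  have "m \<in> set_pmf \<nu>"
    unfolding m_def using assms(1) by (rule Max_set_pmf_in)
  then have "{v\<in>set_pmf \<nu>. m \<le> v} = {m}"
    using assms by (auto intro: antisym)
  then show ?thesis by (simp add: profit_def)
qed

lemma sum_price_shift:
  fixes p p' :: real
  shows "(\<Sum>v\<in>T. (p - c v) * g v) = (\<Sum>v\<in>T. (p' - c v) * g v) + (p - p') * (\<Sum>v\<in>T. g v)"
  by (simp add: sum_distrib_left sum.distrib[symmetric] algebra_simps)

lemma profit_below_support:
  assumes "finite (set_pmf \<nu>)" "\<forall>v\<in>set_pmf \<nu>. p \<le> v \<and> p' \<le> v"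
  shows "profit c \<nu> p = profit c \<nu> p' + (p - p')"
proof -
  have "{v\<in>set_pmf \<nu>. p \<le> v} = set_pmf \<nu>" "{v\<in>set_pmf \<nu>. p' \<le> v} = set_pmf \<nu>"
    using assms by auto
  then show ?thesis
    unfolding profit_def sum_price_shift[of p c _ _ p'] using assms by (simp add: sum_pmf_eq_1)
qed

text \<open>Between consecutive support points the profit is affine in the price, with slope the
  mass above, so it increases strictly up to the next support point.\<close>
lemma profit_less_next:
  assumes fin: "finite (set_pmf \<nu>)" and above: "\<exists>v\<in>set_pmf \<nu>. q < v"
    and no_gain: "(q - c q) * pmf \<nu> q = 0"
  shows "\<exists>w\<in>set_pmf \<nu>. q < w \<and> profit c \<nu> q < profit c \<nu> w"
proof -
  define w where "w = Min {v\<in>set_pmf \<nu>. q < v}"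
  have "w \<in> {v\<in>set_pmf \<nu>. q < v}"
    unfolding w_def using fin above by (intro Min_in) auto
  then have w: "w \<in> set_pmf \<nu>" "q < w" by auto
  define T where "T = {v\<in>set_pmf \<nu>. w \<le> v}"
  have next_point: "w \<le> v" if "v \<in> set_pmf \<nu>" "q < v" for v
    using fin that by (auto simp: w_def)
  have "profit c \<nu> q = (\<Sum>v\<in>T. (q - c v) * pmf \<nu> v)"
    unfolding profit_def
  proof (rule sum.mono_neutral_right)
    show "finite {v\<in>set_pmf \<nu>. q \<le> v}" using fin by simp
    show "T \<subseteq> {v\<in>set_pmf \<nu>. q \<le> v}" using w by (auto simp: T_def)
    show "\<forall>v\<in>{v\<in>set_pmf \<nu>. q \<le> v} - T. (q - c v) * pmf \<nu> v = 0"
      using next_point no_gain by (force simp: T_def)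
  qed
  also have "\<dots> = profit c \<nu> w - (w - q) * (\<Sum>v\<in>T. pmf \<nu> v)"
    unfolding profit_def T_def[symmetric] sum_price_shift[of q c _ T w] by (simp add: algebra_simps)
  also have "\<dots> < profit c \<nu> w"
  proof -
    have "0 < pmf \<nu> w" using w by (simp add: pmf_positive)
    also have "pmf \<nu> w \<le> (\<Sum>v\<in>T. pmf \<nu> v)"
      using fin w by (intro member_le_sum) (auto simp: T_def)
    finally show ?thesis using w by simp
  qed
  finally show ?thesis using w by blast
qed

lemma profit_off_support:
  assumes "finite (set_pmf \<nu>)" "q \<notin> set_pmf \<nu>"
  shows "(\<forall>v\<in>set_pmf \<nu>. v < q) \<and> profit c \<nu> q = 0 \<or> (\<exists>w\<in>set_pmf \<nu>. profit c \<nu> q < profit c \<nu> w)"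
proof (cases "\<forall>v\<in>set_pmf \<nu>. v < q")
  case True
  then show ?thesis by (simp add: profit_above_support)
next
  case False
  then obtain v where "v \<in> set_pmf \<nu>" "q \<le> v" by (auto simp: not_less)
  then have "\<exists>v\<in>set_pmf \<nu>. q < v" using assms(2) by (auto simp: order.order_iff_strict)
  moreover have "(q - c q) * pmf \<nu> q = 0" using assms(2) by (simp add: set_pmf_iff)
  ultimately have "\<exists>w\<in>set_pmf \<nu>. q < w \<and> profit c \<nu> q < profit c \<nu> w"
    by (rule profit_less_next[OF assms(1)])
  then show ?thesis by blast
qed

lemma opt_pricesI_support:
  assumes fin: "finite (set_pmf \<nu>)" and cost: "\<forall>v\<in>set_pmf \<nu>. c v \<le> v"
    and le: "\<forall>q\<in>set_pmf \<nu>. profit c \<nu> q \<le> profit c \<nu> s"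
  shows "s \<in> opt_prices c \<nu>"
  unfolding opt_prices_def
proof (intro CollectI allI)
  fix q
  show "profit c \<nu> q \<le> profit c \<nu> s"
  proof (cases "q \<in> set_pmf \<nu>")
    case True
    then show ?thesis using le by blast
  next
    case False
    define m where "m = Max (set_pmf \<nu>)"
    have m: "m \<in> set_pmf \<nu>"
      unfolding m_def using fin by (rule Max_set_pmf_in)
    have "0 \<le> profit c \<nu> m"
      using profit_Max_support[OF fin, of c] cost m by (simp add: m_def)
    then show ?thesis
      using profit_off_support[OF fin False, of c] le m by fastforce
  qed
qed

lemma opt_prices_support_nonempty:
  assumes fin: "finite (set_pmf \<nu>)" and cost: "\<forall>v\<in>set_pmf \<nu>. c v \<le> v"
  shows "\<exists>s\<in>set_pmf \<nu>. s \<in> opt_prices c \<nu>"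
proof -
  define M where "M = Max (profit c \<nu> ` set_pmf \<nu>)"
  have "M \<in> profit c \<nu> ` set_pmf \<nu>"
    unfolding M_def using fin set_pmf_not_empty by (intro Max_in) auto
  then obtain s where s: "s \<in> set_pmf \<nu>" "profit c \<nu> s = M" by blast
  have "\<forall>q\<in>set_pmf \<nu>. profit c \<nu> q \<le> profit c \<nu> s"
    using fin s by (simp add: M_def)
  then show ?thesis
    using opt_pricesI_support[OF fin cost] s(1) by blast
qed

lemma opt_prices_off_support:
  assumes fin: "finite (set_pmf \<nu>)" and cost: "\<forall>v\<in>set_pmf \<nu>. c v \<le> v"
    and p: "p \<in> opt_prices c \<nu>" "p \<notin> set_pmf \<nu>"
  defines "m \<equiv> Max (set_pmf \<nu>)"
  shows "\<forall>v\<in>set_pmf \<nu>. v < p" "c m = m" "m \<in> opt_prices c \<nu>"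
proof -
  have opt: "profit c \<nu> q \<le> profit c \<nu> p" for q
    using p by (simp add: opt_prices_def)
  then have "\<not> (\<exists>w\<in>set_pmf \<nu>. profit c \<nu> p < profit c \<nu> w)"
    by (simp add: not_less)
  then have above: "(\<forall>v\<in>set_pmf \<nu>. v < p) \<and> profit c \<nu> p = 0"
    using profit_off_support[OF fin p(2), of c] by blast
  then show "\<forall>v\<in>set_pmf \<nu>. v < p" by blast
  have m: "m \<in> set_pmf \<nu>"
    unfolding m_def using fin by (rule Max_set_pmf_in)
  have "(m - c m) * pmf \<nu> m \<le> 0"
    using opt[of m] above profit_Max_support[OF fin, of c] by (simp add: m_def)
  moreover have "0 < pmf \<nu> m" "c m \<le> m"
    using m cost by (auto simp: pmf_positive)
  ultimately show "c m = m"
    by (simp add: mult_le_0_iff)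
  then have "profit c \<nu> m = 0"
    using profit_Max_support[OF fin, of c] by (simp add: m_def)
  then show "m \<in> opt_prices c \<nu>"
    using opt above by (simp add: opt_prices_def)
qed

lemma opt_prices_cost_less:
  assumes fin: "finite (set_pmf \<nu>)" and cost: "\<forall>v\<in>set_pmf \<nu>. c v \<le> v"
    and s: "s \<in> opt_prices c \<nu>" "s \<in> set_pmf \<nu>" "\<exists>v\<in>set_pmf \<nu>. s < v"
  shows "c s < s"
proof (rule ccontr)
  assume "\<not> c s < s"
  then have "(s - c s) * pmf \<nu> s = 0"
    using cost s(2) by force
  then obtain w where "profit c \<nu> s < profit c \<nu> w"
    using profit_less_next[OF fin s(3)] by blast
  then show False
    using s(1) by (auto simp: opt_prices_def not_le[symmetric])
qed

lemma ICD_support_subset_opt_prices: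
  assumes fin: "finite (set_pmf \<nu>)" and "ICD c \<nu>"
  shows "set_pmf \<nu> \<subseteq> opt_prices c \<nu>"
proof -
  obtain K where K: "0 \<le> K" "\<forall>p\<in>set_pmf \<nu>. profit c \<nu> p = K"
    using assms(2) by (auto simp: ICD_def)
  have "profit c \<nu> q \<le> K" for q
  proof (cases "q \<in> set_pmf \<nu>")
    case False
    then show ?thesis using profit_off_support[OF fin False, of c] K by force
  qed (use K in auto)
  then show ?thesis
    using K by (auto simp: opt_prices_def)
qed

lemma opt_prices_profit_eq:
  "p \<in> opt_prices c \<nu> \<Longrightarrow> s \<in> opt_prices c \<nu> \<Longrightarrow> profit c \<nu> p = profit c \<nu> s"
  by (auto simp: opt_prices_def intro: antisym)

lemma opt_prices_gap:
  assumes opt: "opt_prices c \<mu> \<subseteq> opt_prices c \<nu>" and s: "s \<in> opt_prices c \<mu>"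
    and less: "profit c \<nu> q < profit c \<nu> s"
  shows "q \<notin> opt_prices c \<mu>" "profit c \<mu> q < profit c \<mu> s"
proof -
  show q: "q \<notin> opt_prices c \<mu>"
    using less s opt opt_prices_profit_eq[of q c \<nu> s] by auto
  then obtain q' where "profit c \<mu> q < profit c \<mu> q'"
    by (auto simp: opt_prices_def not_le)
  moreover have "profit c \<mu> q' \<le> profit c \<mu> s"
    using s by (simp add: opt_prices_def)
  ultimately show "profit c \<mu> q < profit c \<mu> s"
    by simp
qed

lemma opt_prices_residual:
  assumes fin: "finite (set_pmf \<nu>)" "finite (set_pmf \<mu>')" and cost: "\<forall>v\<in>set_pmf \<mu>'. c v \<le> v"
    and t: "0 \<le> t" "t < 1" and mix: "\<mu> = mix_pmf t \<nu> \<mu>'"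
    and le: "\<forall>q\<in>set_pmf \<mu>'. t * (profit c \<nu> s - profit c \<nu> q) \<le> profit c \<mu> s - profit c \<mu> q"
    and eq: "t * (profit c \<nu> s - profit c \<nu> x) = profit c \<mu> s - profit c \<mu> x"
  shows "x \<in> opt_prices c \<mu>'"
proof (rule opt_pricesI_support[OF fin(2) cost], intro ballI)
  fix q assume q: "q \<in> set_pmf \<mu>'"
  have "profit c \<mu> y = t * profit c \<nu> y + (1 - t) * profit c \<mu>' y" for y
    unfolding mix using fin t by (simp add: profit_mix_pmf)
  from this[of x] this[of q] eq
  have "(1 - t) * (profit c \<mu>' x - profit c \<mu>' q)
      = (profit c \<mu> s - profit c \<mu> q) - t * (profit c \<nu> s - profit c \<nu> q)"
    by (simp add: algebra_simps)
  also have "\<dots> \<ge> 0"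
    using le q by simp
  finally show "profit c \<mu>' q \<le> profit c \<mu>' x"
    using t by (simp add: zero_le_mult_iff)
qed

lemma ICD_insert_below:
  assumes fin: "finite (set_pmf \<nu>')" and "ICD c \<nu>'"
    and below: "\<forall>v\<in>set_pmf \<nu>'. b < v" and cost: "c b < b"
  obtains \<nu> where "set_pmf \<nu> = insert b (set_pmf \<nu>')" "ICD c \<nu>"
proof -
  obtain K where K: "0 \<le> K" "\<forall>w\<in>set_pmf \<nu>'. profit c \<nu>' w = K"
    using assms(2) by (auto simp: ICD_def)
  define m where "m = Min (set_pmf \<nu>')"
  have m: "m \<in> set_pmf \<nu>'"
    unfolding m_def using fin set_pmf_not_empty by (rule Min_in)
  define d where "d = m - b"
  define e where "e = b - c b"
  \<comment> \<open>the gain \<open>\<alpha> e\<close> from selling to \<open>b\<close> at price \<open>b\<close> offsets the loss \<open>(1 - \<alpha>) d\<close> on the rest\<close>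
  define \<alpha> where "\<alpha> = d / (e + d)"
  have "0 < d" "0 < e"
    using m below cost by (auto simp: d_def e_def)
  then have \<alpha>: "0 < \<alpha>" "\<alpha> < 1" "\<alpha> * e = (1 - \<alpha>) * d"
    by (simp_all add: \<alpha>_def field_simps)
  define \<nu> where "\<nu> = mix_pmf \<alpha> (return_pmf b) \<nu>'"
  have profit_\<nu>: "profit c \<nu> w = \<alpha> * profit c (return_pmf b) w + (1 - \<alpha>) * profit c \<nu>' w" for w
    unfolding \<nu>_def using fin \<alpha> by (intro profit_mix_pmf) auto
  have "profit c \<nu> w = (1 - \<alpha>) * K" if "w \<in> set_pmf \<nu>'" for w
    using that below K by (auto simp: profit_\<nu> profit_return_pmf)
  moreover have "profit c \<nu> b = (1 - \<alpha>) * K"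
  proof -
    have "profit c \<nu>' b = profit c \<nu>' m + (b - m)"
      using fin below m_def by (intro profit_below_support) auto
    then have "profit c \<nu> b = \<alpha> * e + (1 - \<alpha>) * (K - d)"
      using K m by (simp add: profit_\<nu> profit_return_pmf d_def e_def)
    also have "\<dots> = (1 - \<alpha>) * K"
      using \<alpha>(3) by (simp add: algebra_simps)
    finally show ?thesis .
  qed
  ultimately show thesis
    using \<alpha> K by (intro that[of \<nu>]) (auto simp: \<nu>_def set_pmf_mix_pmf ICD_def)
qed

lemma ICD_with_support:
  assumes "finite W" "W \<noteq> {}" "\<forall>w\<in>W. w < Max W \<longrightarrow> c w < w" "c (Max W) \<le> Max W"
  shows "\<exists>\<nu>. set_pmf \<nu> = W \<and> ICD c \<nu>"
  using assms
proof (induction W rule: finite_linorder_min_induct)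
  case empty
  then show ?case by simp
next
  case (insert b A)
  show ?case
  proof (cases "A = {}")
    case True
    then have "ICD c (return_pmf b)"
      using insert.prems by (auto simp: ICD_def profit_return_pmf)
    then show ?thesis
      using True by (intro exI[of _ "return_pmf b"]) simp
  next
    case False
    have "b < Max A"
      using insert.hyps False by simp
    then have Max_insert: "Max (insert b A) = Max A"
      using insert.hyps False by (simp add: max_def less_imp_le)
    obtain \<nu>' where \<nu>': "set_pmf \<nu>' = A" "ICD c \<nu>'"
      using insert.IH[OF False] insert.prems Max_insert by auto
    moreover have "c b < b"
      using insert.prems \<open>b < Max A\<close> Max_insert by simp
    ultimately obtain \<nu> where "set_pmf \<nu> = insert b A" "ICD c \<nu>"
      using ICD_insert_below[of \<nu>' c b] insert.hyps by auto
    then show ?thesis by blast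
  qed
qed

lemma ICD_on_optimal_support:
  assumes fin: "finite (set_pmf \<mu>)" and cost: "\<forall>v\<in>set_pmf \<mu>. c v \<le> v"
  obtains \<nu> where "set_pmf \<nu> = opt_prices c \<mu> \<inter> set_pmf \<mu>" "ICD c \<nu>"
    "opt_prices c \<mu> \<subseteq> opt_prices c \<nu>"
proof -
  define S where "S = opt_prices c \<mu> \<inter> set_pmf \<mu>"
  have S: "finite S" "S \<noteq> {}"
    using fin opt_prices_support_nonempty[OF fin cost] by (auto simp: S_def)
  have Max_S: "Max S \<in> S"
    using S by (rule Max_in)
  have "c w < w" if "w \<in> S" "w < Max S" for w
    using opt_prices_cost_less[OF fin cost, of w] that Max_S by (auto simp: S_def)
  moreover have "c (Max S) \<le> Max S"
    using Max_S cost by (auto simp: S_def)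
  ultimately obtain \<nu> where \<nu>: "set_pmf \<nu> = S" "ICD c \<nu>"
    using ICD_with_support[OF S] by blast
  have fin_\<nu>: "finite (set_pmf \<nu>)"
    using S \<nu> by simp
  have "p \<in> opt_prices c \<nu>" if p: "p \<in> opt_prices c \<mu>" for p
  proof (cases "p \<in> set_pmf \<mu>")
    case True
    then show ?thesis
      using ICD_support_subset_opt_prices[OF fin_\<nu> \<nu>(2)] \<nu>(1) p by (auto simp: S_def)
  next
    case False
    define m where "m = Max (set_pmf \<mu>)"
    note off = opt_prices_off_support[OF fin cost p False, folded m_def]
    have m: "m \<in> S"
      using off Max_set_pmf_in[OF fin] by (simp add: S_def m_def)
    then have "Max S = m"
      using S fin by (intro antisym) (auto simp: S_def m_def)
    then have "profit c \<nu> m = 0"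
      using profit_Max_support[OF fin_\<nu>, of c] off \<nu>(1) by simp
    moreover have "profit c \<nu> p = 0"
      using off(1) \<nu>(1) by (intro profit_above_support) (auto simp: S_def)
    moreover have "m \<in> opt_prices c \<nu>"
      using ICD_support_subset_opt_prices[OF fin_\<nu> \<nu>(2)] \<nu>(1) m by auto
    ultimately show ?thesis
      by (simp add: opt_prices_def)
  qed
  then show thesis
    using that \<nu> by (auto simp: S_def)
qed

lemma peel_weight_exists:
  assumes fin: "finite (set_pmf \<mu>)" and sub: "set_pmf \<nu> \<subseteq> set_pmf \<mu>"
    and opt: "opt_prices c \<mu> \<subseteq> opt_prices c \<nu>" and s: "s \<in> opt_prices c \<mu>"
  obtains t where "0 < t" "\<And>v. t * pmf \<nu> v \<le> pmf \<mu> v"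
    "\<forall>q\<in>set_pmf \<mu>. t * (profit c \<nu> s - profit c \<nu> q) \<le> profit c \<mu> s - profit c \<mu> q"
    "(\<exists>v\<in>set_pmf \<nu>. t * pmf \<nu> v = pmf \<mu> v) \<or>
     (\<exists>q\<in>set_pmf \<mu> - opt_prices c \<mu>.
        t * (profit c \<nu> s - profit c \<nu> q) = profit c \<mu> s - profit c \<mu> q)"
proof -
  define V where "V = set_pmf \<mu>"
  \<comment> \<open>constraints \<open>Inl v\<close>: \<open>\<mu> - t \<nu> \<ge> 0\<close>; constraints \<open>Inr q\<close>: \<open>q\<close> does not beat \<open>s\<close> for \<open>\<mu> - t \<nu>\<close>\<close>
  define a where "a = case_sum (pmf \<nu>) (\<lambda>q. profit c \<nu> s - profit c \<nu> q)"
  define b where "b = case_sum (pmf \<mu>) (\<lambda>q. profit c \<mu> s - profit c \<mu> q)"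
  note gap = opt_prices_gap[OF opt s]
  obtain v where v: "v \<in> set_pmf \<nu>"
    using set_pmf_not_empty[of \<nu>] by blast
  have "finite (V <+> V)"
    using fin by (simp add: V_def)
  moreover have "\<exists>i\<in>V <+> V. 0 < a i"
    using v sub by (intro bexI[of _ "Inl v"]) (auto simp: a_def V_def pmf_positive)
  moreover have "\<forall>i\<in>V <+> V. 0 \<le> a i \<and> 0 \<le> b i"
    using s opt by (auto simp: a_def b_def opt_prices_def)
  moreover have "\<forall>i\<in>V <+> V. 0 < a i \<longrightarrow> 0 < b i"
    using sub gap by (auto simp: a_def b_def V_def pmf_positive set_pmf_iff)
  ultimately obtain t where t: "0 < t" "\<forall>i\<in>V <+> V. t * a i \<le> b i"
    "\<exists>i\<in>V <+> V. 0 < a i \<and> t * a i = b i"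
    by (rule min_ratio_exists)
  show thesis
  proof
    show "0 < t" by (fact t(1))
    show "t * pmf \<nu> v \<le> pmf \<mu> v" for v
    proof (cases "v \<in> V")
      case True
      then show ?thesis using t(2)[rule_format, OF InlI[OF True]] by (simp add: a_def b_def)
    next
      case False
      then have "pmf \<nu> v = 0" using sub by (auto simp: V_def set_pmf_iff)
      then show ?thesis by simp
    qed
    show "\<forall>q\<in>set_pmf \<mu>. t * (profit c \<nu> s - profit c \<nu> q) \<le> profit c \<mu> s - profit c \<mu> q"
      using t(2) InrI by (fastforce simp: a_def b_def V_def)
    show "(\<exists>v\<in>set_pmf \<nu>. t * pmf \<nu> v = pmf \<mu> v) \<or>
      (\<exists>q\<in>set_pmf \<mu> - opt_prices c \<mu>.
         t * (profit c \<nu> s - profit c \<nu> q) = profit c \<mu> s - profit c \<mu> q)"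
      using t(3) gap by (auto simp: a_def b_def V_def set_pmf_iff)
  qed
qed

lemma peel_residual:
  assumes fin: "finite (set_pmf \<mu>)" and cost: "\<forall>v\<in>set_pmf \<mu>. c v \<le> v"
    and sub: "set_pmf \<nu> \<subseteq> set_pmf \<mu>" and opt: "opt_prices c \<mu> \<subseteq> opt_prices c \<nu>"
    and s: "s \<in> opt_prices c \<mu>"
    and t: "0 < t" "t < 1" and mix: "\<mu> = mix_pmf t \<nu> \<mu>'" and \<mu>': "set_pmf \<mu>' \<subseteq> set_pmf \<mu>"
    and le: "\<forall>q\<in>set_pmf \<mu>. t * (profit c \<nu> s - profit c \<nu> q) \<le> profit c \<mu> s - profit c \<mu> q"
    and tight: "(\<exists>v\<in>set_pmf \<nu>. t * pmf \<nu> v = pmf \<mu> v) \<or>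
      (\<exists>q\<in>set_pmf \<mu> - opt_prices c \<mu>.
         t * (profit c \<nu> s - profit c \<nu> q) = profit c \<mu> s - profit c \<mu> q)"
  shows "opt_prices c \<mu> \<subseteq> opt_prices c \<mu>'"
    and "card (set_pmf \<mu>') + card (set_pmf \<mu>' - opt_prices c \<mu>')
      < card (set_pmf \<mu>) + card (set_pmf \<mu> - opt_prices c \<mu>)"
proof -
  have fin': "finite (set_pmf \<nu>)" "finite (set_pmf \<mu>')" and cost': "\<forall>v\<in>set_pmf \<mu>'. c v \<le> v"
    using fin cost sub \<mu>' finite_subset by auto
  have "\<forall>q\<in>set_pmf \<mu>'. t * (profit c \<nu> s - profit c \<nu> q) \<le> profit c \<mu> s - profit c \<mu> q"
    using le \<mu>' by blast
  note residual = opt_prices_residual[OF fin' cost' less_imp_le[OF t(1)] t(2) mix this]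
  have opt_eq: "profit c \<nu> p = profit c \<nu> s \<and> profit c \<mu> p = profit c \<mu> s"
    if "p \<in> opt_prices c \<mu>" for p
    using that s opt opt_prices_profit_eq by blast
  show opt': "opt_prices c \<mu> \<subseteq> opt_prices c \<mu>'"
    using opt_eq by (auto intro: residual)
  have "set_pmf \<mu>' \<noteq> set_pmf \<mu> \<or> (set_pmf \<mu> - opt_prices c \<mu>) \<inter> opt_prices c \<mu>' \<noteq> {}"
    using tight
  proof
    assume "\<exists>v\<in>set_pmf \<nu>. t * pmf \<nu> v = pmf \<mu> v"
    then obtain v where v: "v \<in> set_pmf \<nu>" "t * pmf \<nu> v = pmf \<mu> v" by blast
    have "pmf \<mu> v = t * pmf \<nu> v + (1 - t) * pmf \<mu>' v"
      using mix t by (simp add: pmf_mix_pmf)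
    then have "v \<notin> set_pmf \<mu>'"
      using v(2) t by (simp add: set_pmf_iff)
    then show ?thesis using v(1) sub by blast
  next
    assume "\<exists>q\<in>set_pmf \<mu> - opt_prices c \<mu>.
      t * (profit c \<nu> s - profit c \<nu> q) = profit c \<mu> s - profit c \<mu> q"
    then show ?thesis using residual by blast
  qed
  then show "card (set_pmf \<mu>') + card (set_pmf \<mu>' - opt_prices c \<mu>')
      < card (set_pmf \<mu>) + card (set_pmf \<mu> - opt_prices c \<mu>)"
    by (rule card_add_card_Diff_less[OF fin \<mu>' opt'])
qed

lemma ICD_or_peel:
  assumes fin: "finite (set_pmf \<mu>)" and cost: "\<forall>v\<in>set_pmf \<mu>. c v \<le> v"
  obtains (ICD) "ICD c \<mu>"
  | (peel) \<nu> t \<mu>' where "set_pmf \<nu> \<subseteq> set_pmf \<mu>" "ICD c \<nu>" "opt_prices c \<mu> \<subseteq> opt_prices c \<nu>"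
      "0 < t" "t < 1" "\<mu> = mix_pmf t \<nu> \<mu>'"
      "set_pmf \<mu>' \<subseteq> set_pmf \<mu>" "opt_prices c \<mu> \<subseteq> opt_prices c \<mu>'"
      "card (set_pmf \<mu>') + card (set_pmf \<mu>' - opt_prices c \<mu>')
        < card (set_pmf \<mu>) + card (set_pmf \<mu> - opt_prices c \<mu>)"
proof -
  obtain \<nu> where \<nu>: "set_pmf \<nu> = opt_prices c \<mu> \<inter> set_pmf \<mu>" "ICD c \<nu>"
    "opt_prices c \<mu> \<subseteq> opt_prices c \<nu>"
    using ICD_on_optimal_support[OF fin cost] by blast
  then have sub: "set_pmf \<nu> \<subseteq> set_pmf \<mu>" by blast
  obtain s where s: "s \<in> opt_prices c \<mu>"
    using opt_prices_support_nonempty[OF fin cost] by blast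
  obtain t where t: "0 < t" "\<And>v. t * pmf \<nu> v \<le> pmf \<mu> v"
    and weight: "\<forall>q\<in>set_pmf \<mu>. t * (profit c \<nu> s - profit c \<nu> q) \<le> profit c \<mu> s - profit c \<mu> q"
      "(\<exists>v\<in>set_pmf \<nu>. t * pmf \<nu> v = pmf \<mu> v) \<or>
       (\<exists>q\<in>set_pmf \<mu> - opt_prices c \<mu>.
          t * (profit c \<nu> s - profit c \<nu> q) = profit c \<mu> s - profit c \<mu> q)"
    using peel_weight_exists[OF fin sub \<nu>(3) s] by blast
  show thesis
  proof (cases "t < 1")
    case False
    then have "pmf \<nu> v \<le> t * pmf \<nu> v" for v
      by (simp add: mult_le_cancel_right1)
    then have "pmf \<nu> v \<le> pmf \<mu> v" for v
      using t(2)[of v] order_trans by blast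
    then have "\<nu> = \<mu>"
      by (rule pmf_le_imp_eq[OF fin])
    then show thesis
      using \<nu>(2) ICD by simp
  next
    case True
    obtain \<mu>' where \<mu>': "\<mu> = mix_pmf t \<nu> \<mu>'" "set_pmf \<mu>' \<subseteq> set_pmf \<mu>"
      using mix_pmf_residual[OF fin t(1) True t(2)] by blast
    show thesis
      using peel_residual[OF fin cost sub \<nu>(3) s t(1) True \<mu>' weight]
      by (rule peel[OF sub \<nu>(2,3) t(1) True \<mu>'])
  qed
qed

definition ICD_decomposition ::
    "(real \<Rightarrow> real) \<Rightarrow> real pmf \<Rightarrow> nat \<Rightarrow> (nat \<Rightarrow> real pmf) \<Rightarrow> (nat \<Rightarrow> real) \<Rightarrow> bool" where
  "ICD_decomposition c \<mu> J \<nu> q \<longleftrightarrow>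
     (\<forall>j\<in>{1..J}. set_pmf (\<nu> j) \<subseteq> set_pmf \<mu> \<and> ICD c (\<nu> j)) \<and>
     (\<forall>j\<in>{1..J}. q j \<ge> 0) \<and> (\<Sum>j=1..J. q j) = 1 \<and>
     (\<forall>v. pmf \<mu> v = (\<Sum>j=1..J. q j * pmf (\<nu> j) v)) \<and>
     (\<forall>j\<in>{1..J}. opt_prices c \<mu> \<subseteq> opt_prices c (\<nu> j))"

lemma ICD_decomposition_self: "ICD c \<mu> \<Longrightarrow> ICD_decomposition c \<mu> 1 (\<lambda>_. \<mu>) (\<lambda>_. 1)"
  by (simp add: ICD_decomposition_def)

lemma ICD_decomposition_mix_pmf:
  assumes dec: "ICD_decomposition c \<mu>' J \<nu> q"
    and \<mu>': "set_pmf \<mu>' \<subseteq> set_pmf \<mu>" "opt_prices c \<mu> \<subseteq> opt_prices c \<mu>'"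
    and \<nu>\<^sub>0: "set_pmf \<nu>\<^sub>0 \<subseteq> set_pmf \<mu>" "ICD c \<nu>\<^sub>0" "opt_prices c \<mu> \<subseteq> opt_prices c \<nu>\<^sub>0"
    and t: "0 \<le> t" "t \<le> 1" and mix: "\<mu> = mix_pmf t \<nu>\<^sub>0 \<mu>'"
  shows "ICD_decomposition c \<mu> (Suc J) (\<nu>(Suc J := \<nu>\<^sub>0)) ((\<lambda>j. (1 - t) * q j)(Suc J := t))"
proof -
  let ?\<nu> = "\<nu>(Suc J := \<nu>\<^sub>0)" and ?q = "(\<lambda>j. (1 - t) * q j)(Suc J := t)"
  have range: "{1..Suc J} = insert (Suc J) {1..J}"
    by auto
  have sum_Suc: "(\<Sum>j=1..Suc J. f (?q j) (?\<nu> j)) = (\<Sum>j=1..J. f ((1 - t) * q j) (\<nu> j)) + f t \<nu>\<^sub>0"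
    for f :: "real \<Rightarrow> real pmf \<Rightarrow> real"
    unfolding range by (simp add: add.commute)
  have "pmf \<mu> v = (\<Sum>j=1..Suc J. ?q j * pmf (?\<nu> j) v)" for v
  proof -
    have "pmf \<mu> v = (1 - t) * (\<Sum>j=1..J. q j * pmf (\<nu> j) v) + t * pmf \<nu>\<^sub>0 v"
      using dec t unfolding mix by (simp add: ICD_decomposition_def pmf_mix_pmf)
    then show ?thesis
      using sum_Suc[of "\<lambda>a \<rho>. a * pmf \<rho> v"] by (simp add: sum_distrib_left mult.assoc)
  qed
  moreover have "(\<Sum>j=1..Suc J. ?q j) = 1"
    using dec sum_Suc[of "\<lambda>a _. a"] by (simp add: ICD_decomposition_def sum_distrib_left[symmetric])
  moreover have "\<forall>j\<in>{1..J}. set_pmf (\<nu> j) \<subseteq> set_pmf \<mu> \<and> ICD c (\<nu> j) \<and>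
      opt_prices c \<mu> \<subseteq> opt_prices c (\<nu> j) \<and> 0 \<le> q j"
    using dec \<mu>' unfolding ICD_decomposition_def by blast
  ultimately show ?thesis
    using \<nu>\<^sub>0 t unfolding ICD_decomposition_def range by auto
qed

theorem lemmaD1:
  fixes \<mu> :: "real pmf" and c :: "real \<Rightarrow> real"
  assumes "finite (set_pmf \<mu>)"
    and "\<And>v. v \<in> set_pmf \<mu> \<Longrightarrow> c v \<le> v"
  shows "\<exists>(J::nat) (\<nu>::nat \<Rightarrow> real pmf) (q::nat \<Rightarrow> real).
           (\<forall>j\<in>{1..J}. set_pmf (\<nu> j) \<subseteq> set_pmf \<mu> \<and> ICD c (\<nu> j)) \<and>
           (\<forall>j\<in>{1..J}. q j \<ge> 0) \<and> (\<Sum>j=1..J. q j) = 1 \<and>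
           (\<forall>v. pmf \<mu> v = (\<Sum>j=1..J. q j * pmf (\<nu> j) v)) \<and>
           (\<forall>j\<in>{1..J}. opt_prices c \<mu> \<subseteq> opt_prices c (\<nu> j))"
proof -
  have "finite (set_pmf \<mu>)" "\<forall>v\<in>set_pmf \<mu>. c v \<le> v"
    using assms by auto
  then have "\<exists>J \<nu> q. ICD_decomposition c \<mu> J \<nu> q"
  proof (induction "card (set_pmf \<mu>) + card (set_pmf \<mu> - opt_prices c \<mu>)"
      arbitrary: \<mu> rule: less_induct)
    case (less \<mu>)
    from less.prems show ?case
    proof (cases rule: ICD_or_peel)
      case ICD
      then show ?thesis by (blast intro: ICD_decomposition_self)
    next
      case (peel \<nu> t \<mu>')
      have "finite (set_pmf \<mu>')" "\<forall>v\<in>set_pmf \<mu>'. c v \<le> v"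
        using peel(7) less.prems finite_subset by auto
      then obtain J \<nu>s q where "ICD_decomposition c \<mu>' J \<nu>s q"
        using less.hyps[OF peel(9)] by blast
      then show ?thesis
        using peel by (blast intro: ICD_decomposition_mix_pmf less_imp_le)
    qed
  qed
  then show ?thesis
    unfolding ICD_decomposition_def .
qed

end
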